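(* Let $q$ be a prime power and $k,\delta,\alpha$ positive integers with $\alpha\ge3$ and $\delta\ge(\alpha-1)(k-1)$. Then, with $q,k,\delta,\alpha$ fixed and $n\to\infty$, $$B_q(n,k,\delta;\alpha)=O\!\left(q^{\left(1+\frac{1}{\lfloor\alpha/2\rfloor}\right)n}\right).$$
   Context: For a prime power $q$, $\mathcal{G}_q(n,k)$ denotes the set of all $k$-dimensional subspaces of $\mathbb{F}_q^n$. An $\alpha$-$(n,k,\delta)_q^c$ covering Grassmannian code is a subset $\mathcal{C}\subseteq\mathcal{G}_q(n,k)$ (no repeated codewords) such that every set of $\alpha$ distinct codewords of $\mathcal{C}$ spans a subspace of $\mathbb{F}_q^n$ of dimension at least $k+\delta$. $B_q(n,k,\delta;\alpha)$ denotes the maximum size of an $\alpha$-$(n,k,\delta)_q^c$ code. The implied constant in $O(\cdot)$ may depend on $q,k,\delta,\alpha$ but not on $n$. *)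

theory Defs
  imports Main "HOL-Library.Function_Algebras" "HOL-Library.Landau_Symbols" "HOL-Library.Cardinality"
begin

text \<open>Vectors of F_q^n are represented as functions nat => 'a vanishing from index n on.\<close>

definition scaleF :: "'a::field \<Rightarrow> (nat \<Rightarrow> 'a) \<Rightarrow> (nat \<Rightarrow> 'a)" where
  "scaleF c v = (\<lambda>i. c * v i)"

definition Fn :: "nat \<Rightarrow> (nat \<Rightarrow> 'a::field) set" where
  "Fn n = {v. \<forall>i\<ge>n. v i = 0}"

definition subspF :: "(nat \<Rightarrow> 'a::field) set \<Rightarrow> bool" where
  "subspF W = module.subspace scaleF W"

definition spanF :: "(nat \<Rightarrow> 'a::field) set \<Rightarrow> (nat \<Rightarrow> 'a) set" where
  "spanF S = module.span scaleF S"

definition dimF :: "(nat \<Rightarrow> 'a::field) set \<Rightarrow> nat" where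
  "dimF S = vector_space.dim scaleF S"

definition Grass :: "nat \<Rightarrow> nat \<Rightarrow> (nat \<Rightarrow> 'a::field) set set" where
  "Grass n k = {W. W \<subseteq> Fn n \<and> subspF W \<and> dimF W = k}"

definition covering_code ::
  "nat \<Rightarrow> nat \<Rightarrow> nat \<Rightarrow> nat \<Rightarrow> (nat \<Rightarrow> 'a::field) set set \<Rightarrow> bool" where
  "covering_code \<alpha> n k \<delta> C \<longleftrightarrow> C \<subseteq> Grass n k \<and>
     (\<forall>S\<subseteq>C. card S = \<alpha> \<longrightarrow> dimF (spanF (\<Union>S)) \<ge> k + \<delta>)"

text \<open>B_q(n,k,delta;alpha), where q = CARD('a).\<close>
definition Bq :: "'a::{field,finite} itself \<Rightarrow> nat \<Rightarrow> nat \<Rightarrow> nat \<Rightarrow> nat \<Rightarrow> nat" where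
  "Bq _ n k \<delta> \<alpha> = Max {card C | C. covering_code \<alpha> n k \<delta> (C :: (nat \<Rightarrow> 'a) set set)}"

end

theory Submission
  imports Defs "HOL-Library.FuncSet"
begin

text \<open>
  For \<open>k = 1\<close> a code has at most \<open>q\<^sup>n\<close> words. For \<open>k \<ge> 2\<close> pick two vectors of a basis of
  every codeword; any \<open>\<alpha>\<close> codewords span dimension \<open>k + \<delta> > \<alpha> + \<alpha>(k - 2)\<close>, so their pairs
  involve more than \<open>\<alpha>\<close> vectors. The pairs are thus the edges of a graph on \<open>N = q\<^sup>n\<close> vertices
  in which any \<open>\<alpha>\<close> edges touch more than \<open>\<alpha>\<close> vertices. With \<open>t = \<lfloor>\<alpha>/2\<rfloor>\<close> and
  \<open>c = \<alpha> + t + N\<^bsup>1/t\<^esup>\<close>, more than \<open>cN\<close> edges would leave, after repeatedly deleting vertices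
  of degree at most \<open>c\<close>, a nonempty subgraph of minimum degree \<open>d > c \<ge> \<alpha>\<close>. There every
  nonempty set of at most \<open>\<alpha>\<close> edges touches more vertices than it has edges, so it contains no
  two distinct paths of length \<open>t\<close> with the same endpoints. Counting such paths gives
  \<open>N (d - t)\<^sup>t \<le> N\<^sup>2\<close>, contradicting \<open>d - t > N\<^bsup>1/t\<^esup>\<close>.
\<close>

lemma vector_space_scaleF: "vector_space (scaleF :: 'a::field \<Rightarrow> (nat \<Rightarrow> 'a) \<Rightarrow> (nat \<Rightarrow> 'a))"
  by unfold_locales (auto simp: scaleF_def fun_eq_iff algebra_simps)

lemma dimF_spanF_le_card:
  fixes X :: "(nat \<Rightarrow> 'a::field) set"
  assumes "A \<subseteq> spanF X" "finite X"
  shows "dimF (spanF A) \<le> card X"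
proof -
  interpret vector_space "scaleF :: 'a \<Rightarrow> _" by (rule vector_space_scaleF)
  show ?thesis using assms unfolding dimF_def spanF_def by (simp add: dim_le_card)
qed

lemma spanF_mono: "A \<subseteq> B \<Longrightarrow> spanF (A :: (nat \<Rightarrow> 'a::field) set) \<subseteq> spanF B"
proof -
  interpret vector_space "scaleF :: 'a \<Rightarrow> _" by (rule vector_space_scaleF)
  show "A \<subseteq> B \<Longrightarrow> spanF A \<subseteq> spanF B" unfolding spanF_def by (rule span_mono)
qed

lemma spanF_minimal: "subspF W \<Longrightarrow> B \<subseteq> W \<Longrightarrow> spanF (B :: (nat \<Rightarrow> 'a::field) set) \<subseteq> W"
proof -
  interpret vector_space "scaleF :: 'a \<Rightarrow> _" by (rule vector_space_scaleF)
  show "subspF W \<Longrightarrow> B \<subseteq> W \<Longrightarrow> spanF B \<subseteq> W" unfolding spanF_def subspF_def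
    by (rule span_minimal)
qed

lemma finite_basis_of_dimF:
  fixes W :: "(nat \<Rightarrow> 'a::field) set"
  assumes "dimF W = k" "k \<ge> 1"
  obtains B where "B \<subseteq> W" "W \<subseteq> spanF B" "finite B" "card B = k"
proof -
  interpret vector_space "scaleF :: 'a \<Rightarrow> _" by (rule vector_space_scaleF)
  obtain B where "B \<subseteq> W" "W \<subseteq> span B" "card B = dim W" by (rule basis_exists)
  with assms that show thesis unfolding dimF_def spanF_def
    by (metis card.infinite not_one_le_zero)
qed

lemma finite_Fn: "finite (Fn n :: (nat \<Rightarrow> 'a::{field,finite}) set)"
  and card_Fn: "card (Fn n :: (nat \<Rightarrow> 'a::{field,finite}) set) = CARD('a) ^ n"
proof -
  have bij: "bij_betw (\<lambda>v. restrict v {..<n}) (Fn n :: (nat \<Rightarrow> 'a) set) (PiE {..<n} (\<lambda>_. UNIV))"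
  proof (rule bij_betwI[where g = "\<lambda>f i. if i < n then f i else 0"])
    show "(\<lambda>f i. if i < n then f i else 0) \<in> PiE {..<n} (\<lambda>_. UNIV) \<rightarrow> (Fn n :: (nat \<Rightarrow> 'a) set)"
      unfolding Fn_def by auto
    show "(\<lambda>i. if i < n then restrict x {..<n} i else 0) = x" if "x \<in> Fn n" for x :: "nat \<Rightarrow> 'a"
      using that unfolding Fn_def by (auto simp: fun_eq_iff)
    show "restrict (\<lambda>i. if i < n then y i else 0) {..<n} = y"
      if "y \<in> PiE {..<n} (\<lambda>_. (UNIV :: 'a set))" for y
      using that by (auto simp: fun_eq_iff PiE_def extensional_def)
  qed auto
  show "finite (Fn n :: (nat \<Rightarrow> 'a) set)" using bij_betw_finite[OF bij] by (simp add: finite_PiE)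
  show "card (Fn n :: (nat \<Rightarrow> 'a) set) = CARD('a) ^ n"
    using bij_betw_same_card[OF bij] by (simp add: card_PiE)
qed

lemma CARD_field_ge_2: "CARD('a::{field,finite}) \<ge> 2"
proof -
  have "card {0::'a, 1} \<le> CARD('a)" by (rule card_mono) auto
  then show ?thesis by simp
qed

lemma finite_Grass: "finite (Grass n k :: (nat \<Rightarrow> 'a::{field,finite}) set set)"
proof -
  have "Grass n k \<subseteq> Pow (Fn n :: (nat \<Rightarrow> 'a) set)" unfolding Grass_def by auto
  then show ?thesis using finite_Fn finite_subset by blast
qed

lemma dimF_span_Union_le:
  fixes S :: "(nat \<Rightarrow> 'a::field) set set"
  assumes "finite S"
    and basis: "\<And>W. W \<in> S \<Longrightarrow> \<beta> W \<subseteq> W \<and> W \<subseteq> spanF (\<beta> W) \<and> finite (\<beta> W) \<and> card (\<beta> W) = k"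
    and pair: "\<And>W. W \<in> S \<Longrightarrow> \<gamma> W \<subseteq> \<beta> W \<and> card (\<gamma> W) = 2"
  shows "dimF (spanF (\<Union>S)) \<le> card (\<Union>(\<gamma> ` S)) + card S * (k - 2)"
proof -
  define R where "R = (\<Union>W\<in>S. \<beta> W - \<gamma> W)"
  have fin_\<beta>: "finite (\<beta> W)" and fin_\<gamma>: "finite (\<gamma> W)" if "W \<in> S" for W
    using basis[OF that] pair[OF that] finite_subset by blast+
  have "\<Union>S \<subseteq> spanF (\<Union>(\<gamma> ` S) \<union> R)"
  proof
    fix v assume "v \<in> \<Union>S"
    then obtain W where W: "W \<in> S" "v \<in> W" by blast
    have "\<beta> W \<subseteq> \<Union>(\<gamma> ` S) \<union> R" unfolding R_def using W(1) by blast
    then show "v \<in> spanF (\<Union>(\<gamma> ` S) \<union> R)"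
      using basis[OF W(1)] W(2) spanF_mono by blast
  qed
  then have "dimF (spanF (\<Union>S)) \<le> card (\<Union>(\<gamma> ` S) \<union> R)"
    by (rule dimF_spanF_le_card) (use assms(1) fin_\<beta> fin_\<gamma> in \<open>auto simp: R_def\<close>)
  also have "\<dots> \<le> card (\<Union>(\<gamma> ` S)) + card R" by (rule card_Un_le)
  also have "card R \<le> (\<Sum>W\<in>S. card (\<beta> W - \<gamma> W))" unfolding R_def by (rule card_UN_le[OF assms(1)])
  also have "\<dots> = card S * (k - 2)"
    using basis pair fin_\<gamma> by (simp add: card_Diff_subset)
  finally show ?thesis by simp
qed

lemma covering_code_edge_map:
  fixes C :: "(nat \<Rightarrow> 'a::field) set set"
  assumes code: "covering_code \<alpha> n k \<delta> C" and "k \<ge> 2" "\<alpha> \<ge> 1" "\<delta> \<ge> (\<alpha> - 1) * (k - 1)"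
  obtains \<phi> :: "(nat \<Rightarrow> 'a) set \<Rightarrow> (nat \<Rightarrow> 'a) set"
  where "\<And>W. W \<in> C \<Longrightarrow> card (\<phi> W) = 2" "\<Union>(\<phi> ` C) \<subseteq> Fn n"
    "\<And>S. S \<subseteq> C \<Longrightarrow> card S = \<alpha> \<Longrightarrow> \<alpha> < card (\<Union>(\<phi> ` S))"
proof -
  have C: "C \<subseteq> Grass n k" and dim_ge: "\<And>S. S \<subseteq> C \<Longrightarrow> card S = \<alpha> \<Longrightarrow> k + \<delta> \<le> dimF (spanF (\<Union>S))"
    using code unfolding covering_code_def by auto
  have "\<exists>B. B \<subseteq> W \<and> W \<subseteq> spanF B \<and> finite B \<and> card B = k" if "W \<in> C" for W
  proof -
    have "dimF W = k" using C that unfolding Grass_def by auto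
    from finite_basis_of_dimF[OF this] \<open>k \<ge> 2\<close> show ?thesis by (metis one_le_numeral order_trans)
  qed
  then obtain \<beta> where \<beta>: "\<And>W. W \<in> C \<Longrightarrow> \<beta> W \<subseteq> W \<and> W \<subseteq> spanF (\<beta> W) \<and> finite (\<beta> W) \<and> card (\<beta> W) = k"
    by metis
  have "\<exists>G. G \<subseteq> \<beta> W \<and> card G = 2" if "W \<in> C" for W
    using \<beta>[OF that] \<open>k \<ge> 2\<close> by (metis obtain_subset_with_card_n)
  then obtain \<gamma> where \<gamma>: "\<And>W. W \<in> C \<Longrightarrow> \<gamma> W \<subseteq> \<beta> W \<and> card (\<gamma> W) = 2"
    by metis
  show thesis
  proof
    show "card (\<gamma> W) = 2" if "W \<in> C" for W using \<gamma>[OF that] by blast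
    have "\<gamma> W \<subseteq> Fn n" if "W \<in> C" for W
      using \<beta>[OF that] \<gamma>[OF that] C that unfolding Grass_def by auto
    then show "\<Union>(\<gamma> ` C) \<subseteq> Fn n" by blast
  next
    fix S assume S: "S \<subseteq> C" "card S = \<alpha>"
    then have "finite S" using \<open>\<alpha> \<ge> 1\<close> card.infinite by fastforce
    have "dimF (spanF (\<Union>S)) \<le> card (\<Union>(\<gamma> ` S)) + card S * (k - 2)"
      by (rule dimF_span_Union_le[OF \<open>finite S\<close>]) (use \<beta> \<gamma> S(1) in blast)+
    then have "k + \<delta> \<le> card (\<Union>(\<gamma> ` S)) + \<alpha> * (k - 2)"
      using dim_ge[OF S] S(2) by (metis mult.commute order_trans)
    moreover have "\<alpha> + \<alpha> * (k - 2) < k + \<delta>"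
    proof -
      obtain k' a where "k = k' + 2" "\<alpha> = a + 1"
        using \<open>k \<ge> 2\<close> \<open>\<alpha> \<ge> 1\<close> by (metis add.commute le_add_diff_inverse)
      then show ?thesis using \<open>\<delta> \<ge> (\<alpha> - 1) * (k - 1)\<close> by (simp add: algebra_simps)
    qed
    ultimately show "\<alpha> < card (\<Union>(\<gamma> ` S))" by linarith
  qed
qed

lemma card_Grass_1_le:
  fixes C :: "(nat \<Rightarrow> 'a::{field,finite}) set set"
  assumes "C \<subseteq> Grass n 1"
  shows "card C \<le> CARD('a) ^ n"
proof -
  have "\<exists>b. b \<in> W \<and> spanF {b} = W" if "W \<in> C" for W
  proof -
    have W: "subspF W" "dimF W = 1" using that assms unfolding Grass_def by auto
    obtain B where B: "B \<subseteq> W" "W \<subseteq> spanF B" "finite B" "card B = 1"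
      by (rule finite_basis_of_dimF[OF W(2) order_refl])
    then obtain b where "B = {b}" using card_1_singletonE by blast
    with B spanF_minimal[OF W(1) B(1)] show ?thesis by blast
  qed
  then obtain f where f_in: "\<And>W. W \<in> C \<Longrightarrow> f W \<in> W"
    and span_f: "\<And>W. W \<in> C \<Longrightarrow> spanF {f W} = W" by metis
  have "inj_on f C" by (rule inj_onI) (metis span_f)
  moreover have "f ` C \<subseteq> Fn n" using f_in assms unfolding Grass_def by blast
  ultimately have "card C \<le> card (Fn n :: (nat \<Rightarrow> 'a) set)"
    using card_mono[OF finite_Fn] card_image by metis
  then show ?thesis by (simp add: card_Fn)
qed

lemma exists_subgraph_degree_gt:
  fixes c :: real and \<phi> :: "'e \<Rightarrow> 'v set"
  assumes "c \<ge> 0" "finite V" "finite C" "\<Union>(\<phi> ` C) \<subseteq> V" "c * card V < card C"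
  shows "\<exists>C'\<subseteq>C. \<exists>V'\<subseteq>V. C' \<noteq> {} \<and> \<Union>(\<phi> ` C') \<subseteq> V' \<and> (\<forall>u\<in>V'. c < card {e \<in> C'. u \<in> \<phi> e})"
  using assms
proof (induction "card V" arbitrary: V C rule: less_induct)
  case less
  show ?case
  proof (cases "\<forall>u\<in>V. c < card {e \<in> C. u \<in> \<phi> e}")
    case True
    have "C \<noteq> {}" using less.prems(1,5) by (metis card.empty not_less of_nat_0 of_nat_0_le_iff mult_nonneg_nonneg)
    then show ?thesis using True less.prems(4) by blast
  next
    case False
    then obtain u where u: "u \<in> V" "card {e \<in> C. u \<in> \<phi> e} \<le> c" by auto
    define C1 where "C1 = {e \<in> C. u \<notin> \<phi> e}"
    have "C = C1 \<union> {e \<in> C. u \<in> \<phi> e}" "C1 \<inter> {e \<in> C. u \<in> \<phi> e} = {}" unfolding C1_def by auto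
    then have "card C = card C1 + card {e \<in> C. u \<in> \<phi> e}"
      using less.prems(3) by (metis card_Un_disjoint finite_Un)
    moreover have card_V: "card V = card (V - {u}) + 1" using card.remove[OF less.prems(2) u(1)] by simp
    ultimately have fewer_edges: "c * card (V - {u}) < card C1" using less.prems(5) u(2)
      by (simp add: algebra_simps)
    have C1_in: "\<Union>(\<phi> ` C1) \<subseteq> V - {u}" using less.prems(4) unfolding C1_def by auto
    have smaller: "card (V - {u}) < card V" using card_V by simp
    have "finite C1" using less.prems(3) unfolding C1_def by auto
    from less.hyps[OF smaller less.prems(1) finite_Diff[OF less.prems(2)] this C1_in fewer_edges]
    obtain C' V' where "C' \<subseteq> C1" "V' \<subseteq> V - {u}"
      "C' \<noteq> {} \<and> \<Union>(\<phi> ` C') \<subseteq> V' \<and> (\<forall>u\<in>V'. c < card {e \<in> C'. u \<in> \<phi> e})"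
      by blast
    moreover have "C1 \<subseteq> C" unfolding C1_def by blast
    ultimately show ?thesis by (meson Diff_subset order_trans)
  qed
qed

definition path_edges :: "(nat \<Rightarrow> 'v) \<Rightarrow> nat \<Rightarrow> 'v set set" where
  "path_edges p t = (\<lambda>j. {p j, p (Suc j)}) ` {..<t}"

lemma inj_on_path_edge:
  assumes "inj_on p {..t}"
  shows "inj_on (\<lambda>j. {p j, p (Suc j)}) {..<t}"
proof (rule inj_onI)
  fix a b assume ab: "a \<in> {..<t}" "b \<in> {..<t}" "{p a, p (Suc a)} = {p b, p (Suc b)}"
  then have "p a = p b \<or> p a = p (Suc b) \<and> p (Suc a) = p b" by (auto simp: doubleton_eq_iff)
  then show "a = b"
  proof
    assume "p a = p (Suc b) \<and> p (Suc a) = p b"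
    then have "a = Suc b" "Suc a = b" using assms ab(1,2) by (auto dest: inj_onD)
    then show ?thesis by simp
  qed (use assms ab(1,2) in \<open>auto dest: inj_onD\<close>)
qed

lemma card_path_edges: "inj_on p {..t} \<Longrightarrow> card (path_edges p t) = t"
  unfolding path_edges_def by (simp add: card_image inj_on_path_edge)

lemma Union_path_edges:
  assumes "t \<ge> 1"
  shows "\<Union>(path_edges p t) = p ` {..t}"
proof
  show "\<Union>(path_edges p t) \<subseteq> p ` {..t}" unfolding path_edges_def by auto
  show "p ` {..t} \<subseteq> \<Union>(path_edges p t)"
  proof
    fix x assume "x \<in> p ` {..t}"
    then obtain j where j: "j \<le> t" "x = p j" by auto
    show "x \<in> \<Union>(path_edges p t)"
    proof (cases "j < t")
      case True then show ?thesis using j unfolding path_edges_def by auto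
    next
      case False
      then have "j = Suc (t - 1)" using j assms by auto
      then show ?thesis using j assms unfolding path_edges_def by (auto intro!: bexI[of _ "t - 1"])
    qed
  qed
qed

lemma divergence_edge_notin_path_edges:
  assumes ip: "inj_on p {..t}" and iq: "inj_on q {..t}" and "Suc i \<le> t"
    and agree: "\<And>j. j \<le> i \<Longrightarrow> p j = q j" and differ: "p (Suc i) \<noteq> q (Suc i)"
  shows "{q i, q (Suc i)} \<notin> path_edges p t"
proof
  assume "{q i, q (Suc i)} \<in> path_edges p t"
  then obtain a where a: "a < t" "{p i, q (Suc i)} = {p a, p (Suc a)}"
    unfolding path_edges_def using agree[of i] by auto
  then consider "p i = p a" "q (Suc i) = p (Suc a)" | "p i = p (Suc a)" "q (Suc i) = p a"
    by (auto simp: doubleton_eq_iff)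
  then show False
  proof cases
    case 1
    then have "i = a" using inj_onD[OF ip 1(1)] a(1) \<open>Suc i \<le> t\<close> by simp
    then show False using 1 differ by simp
  next
    case 2
    then have "i = Suc a" using inj_onD[OF ip 2(1)] a(1) \<open>Suc i \<le> t\<close> by simp
    then have "q (Suc i) = q a" using 2 agree[of a] by simp
    then show False using inj_onD[OF iq] \<open>i = Suc a\<close> \<open>Suc i \<le> t\<close> by fastforce
  qed
qed

lemma path_edge_leaving_other_path:
  assumes ip: "inj_on p {..t}" and iq: "inj_on q {..t}" and first: "p 0 = q 0" and last: "p t = q t"
    and differ: "i \<le> t" "p i \<noteq> q i"
  obtains j where "j < t" "q (Suc j) \<in> p ` {..t}" "{q j, q (Suc j)} \<notin> path_edges p t"
proof -
  define P where "P = p ` {..t}"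
  define i0 where "i0 = (LEAST i. p i \<noteq> q i)"
  have i0: "p i0 \<noteq> q i0" unfolding i0_def using differ(2) by (rule LeastI)
  have "i0 \<le> i" unfolding i0_def using differ(2) by (rule Least_le)
  have agree: "p j = q j" if "j < i0" for j using not_less_Least[of j] that unfolding i0_def by blast
  have "0 < i0" using i0 first by (cases i0) auto
  have "i0 < t" using i0 \<open>i0 \<le> i\<close> differ(1) last by (metis le_neq_implies_less order_trans)
  define m where "m = (LEAST m. i0 \<le> m \<and> q m \<in> P)"
  have t: "i0 \<le> t \<and> q t \<in> P" using \<open>i0 < t\<close> last unfolding P_def by (simp add: image_eqI[of _ p t])
  have m: "i0 \<le> m \<and> q m \<in> P" unfolding m_def using t by (rule LeastI)
  have "m \<le> t" unfolding m_def using t by (rule Least_le)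
  have before_m: "q j \<notin> P" if "i0 \<le> j" "j < m" for j
    using not_less_Least[of j "\<lambda>m. i0 \<le> m \<and> q m \<in> P"] that unfolding m_def by blast
  define j where "j = m - 1"
  have Suc_j: "Suc j = m" using m \<open>0 < i0\<close> unfolding j_def by simp
  have "{q j, q (Suc j)} \<notin> path_edges p t"
  proof (cases "i0 < m")
    case True
    then have "q j \<notin> P" using before_m Suc_j by simp
    moreover have "\<Union>(path_edges p t) = P" using Union_path_edges[of t p] \<open>i0 < t\<close> unfolding P_def by simp
    ultimately show ?thesis by blast
  next
    case False
    then have "Suc j = i0" using m Suc_j by simp
    show ?thesis
    proof (rule divergence_edge_notin_path_edges[OF ip iq])
      show "Suc j \<le> t" using Suc_j \<open>m \<le> t\<close> by simp
      show "p k = q k" if "k \<le> j" for k using agree that \<open>Suc j = i0\<close> by simp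
      show "p (Suc j) \<noteq> q (Suc j)" using i0 \<open>Suc j = i0\<close> by simp
    qed
  qed
  then show thesis using that[of j] Suc_j m \<open>m \<le> t\<close> unfolding P_def by simp
qed

lemma card_two_paths_le:
  assumes ip: "inj_on p {..t}" and iq: "inj_on q {..t}" and first: "p 0 = q 0" and last: "p t = q t"
    and differ: "i \<le> t" "p i \<noteq> q i"
  shows "card (p ` {..t} \<union> q ` {..t}) \<le> card (path_edges p t \<union> path_edges q t)"
proof -
  define P where "P = p ` {..t}"
  define EP where "EP = path_edges p t"
  define EQ where "EQ = path_edges q t"
  define e where "e j = {q j, q (Suc j)}" for j
  define J where "J = {j. j < t \<and> q (Suc j) \<notin> P}"
  obtain j0 where j0: "j0 < t" "q (Suc j0) \<in> P" "e j0 \<notin> EP"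
    using path_edge_leaving_other_path[OF assms] unfolding P_def EP_def e_def by blast
  \<comment> \<open>every vertex of \<open>q\<close> outside \<open>P\<close> is the head of an edge of \<open>q\<close> outside \<open>EP\<close>, and \<open>e j0\<close> is one more\<close>
  have "q ` {..t} - P = q ` Suc ` J"
  proof
    show "q ` {..t} - P \<subseteq> q ` Suc ` J"
    proof
      fix x assume "x \<in> q ` {..t} - P"
      then obtain j where j: "j \<le> t" "x = q j" "x \<notin> P" by auto
      then have "j \<noteq> 0" using first unfolding P_def by force
      then obtain j' where "j = Suc j'" using not0_implies_Suc by blast
      then show "x \<in> q ` Suc ` J" using j unfolding J_def by auto
    qed
  qed (auto simp: J_def)
  moreover have "inj_on q (Suc ` J)" by (rule inj_on_subset[OF iq]) (auto simp: J_def)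
  ultimately have card_new_vertices: "card (q ` {..t} - P) = card J"
    by (simp add: card_image)
  have "\<Union>EP \<subseteq> P" unfolding EP_def P_def path_edges_def by auto
  then have "e ` insert j0 J \<subseteq> EQ - EP"
    using j0 unfolding EQ_def J_def e_def path_edges_def by auto
  moreover have "inj_on e (insert j0 J)"
    using inj_on_subset[OF inj_on_path_edge[OF iq], of "insert j0 J"] j0 unfolding J_def e_def by auto
  moreover have "j0 \<notin> J" "finite J" using j0 unfolding J_def by auto
  ultimately have card_new_edges: "Suc (card J) \<le> card (EQ - EP)"
    using card_mono[of "EQ - EP" "e ` insert j0 J"] card_image
    by (fastforce simp: EQ_def path_edges_def)
  have "card (P \<union> q ` {..t}) = card P + card (q ` {..t} - P)"
    by (metis Un_Diff_cancel card_Un_disjoint Diff_disjoint finite_Diff finite_atMost finite_imageI P_def)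
  moreover have "card (EP \<union> EQ) = card EP + card (EQ - EP)"
    by (metis Un_Diff_cancel card_Un_disjoint Diff_disjoint finite_Diff finite_lessThan finite_imageI
        EP_def EQ_def path_edges_def)
  moreover have "card P = Suc t" unfolding P_def using card_image[OF ip] by simp
  ultimately show ?thesis
    using card_path_edges[OF ip] card_new_vertices card_new_edges unfolding P_def EP_def EQ_def by simp
qed

locale sparse_graph =
  fixes C :: "'e set" and \<phi> :: "'e \<Rightarrow> 'v set" and V :: "'v set" and \<alpha> t d :: nat
  assumes finite_C: "finite C" and finite_V: "finite V"
    and card_edge: "\<And>e. e \<in> C \<Longrightarrow> card (\<phi> e) = 2"
    and edges_in_V: "\<Union>(\<phi> ` C) \<subseteq> V"
    and degree_ge: "\<And>u. u \<in> V \<Longrightarrow> d \<le> card {e \<in> C. u \<in> \<phi> e}"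
    and alpha_le_degree: "\<alpha> \<le> d"
    and sparse: "\<And>S. S \<subseteq> C \<Longrightarrow> card S = \<alpha> \<Longrightarrow> \<alpha> < card (\<Union>(\<phi> ` S))"
    and t_pos: "1 \<le> t" and two_t_le: "2 * t \<le> \<alpha>"
begin

lemma finite_edge: "e \<in> C \<Longrightarrow> finite (\<phi> e)"
  using card_edge by (metis card.infinite zero_neq_numeral)

text \<open>
  Pad \<open>E\<close> to \<open>\<alpha>\<close> edges by further edges at one vertex \<open>u\<close> of \<open>E\<close> (possible as \<open>d \<ge> \<alpha>\<close>);
  each of them adds at most one vertex, so \<open>sparse\<close> forces \<open>E\<close> itself to have more vertices than edges.
\<close>
lemma card_lt_card_Union_edges:
  assumes E: "E \<subseteq> C" "E \<noteq> {}" "card E \<le> \<alpha>"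
  shows "card E < card (\<Union>(\<phi> ` E))"
proof (rule ccontr)
  assume "\<not> ?thesis"
  then have few_vertices: "card (\<Union>(\<phi> ` E)) \<le> card E" by simp
  have "finite E" using E(1) finite_C finite_subset by blast
  obtain e0 u where e0: "e0 \<in> E" "u \<in> \<phi> e0"
    using E(1,2) card_edge by (metis all_not_in_conv card.empty zero_neq_numeral subsetD)
  define A where "A = {e \<in> C. u \<in> \<phi> e} - E"
  have "finite A" unfolding A_def using finite_C by simp
  have "d \<le> card {e \<in> C. u \<in> \<phi> e}" using degree_ge e0 E(1) edges_in_V by blast
  also have "\<dots> \<le> card (A \<union> E)" unfolding A_def using \<open>finite A\<close> \<open>finite E\<close> finite_C by (intro card_mono) auto
  also have "\<dots> \<le> card A + card E" by (rule card_Un_le)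
  finally obtain A' where A': "A' \<subseteq> A" "card A' = \<alpha> - card E"
    using alpha_le_degree by (metis obtain_subset_with_card_n le_diff_conv order_trans)
  have "finite A'" using A'(1) \<open>finite A\<close> finite_subset by blast
  define S where "S = E \<union> A'"
  have S: "S \<subseteq> C" "card S = \<alpha>"
    unfolding S_def using E A' card_Un_disjoint[OF \<open>finite E\<close> \<open>finite A'\<close>] by (auto simp: A_def)
  have A'_edges: "e \<in> C" "u \<in> \<phi> e" if "e \<in> A'" for e using that A' unfolding A_def by auto
  have "finite (\<Union>(\<phi> ` E))" using \<open>finite E\<close> E(1) finite_edge by blast
  moreover have "finite (\<Union>e\<in>A'. \<phi> e - {u})" using \<open>finite A'\<close> A'_edges(1) finite_edge by blast
  moreover have "\<Union>(\<phi> ` S) \<subseteq> \<Union>(\<phi> ` E) \<union> (\<Union>e\<in>A'. \<phi> e - {u})"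
    unfolding S_def using e0 by auto
  ultimately have "card (\<Union>(\<phi> ` S)) \<le> card (\<Union>(\<phi> ` E) \<union> (\<Union>e\<in>A'. \<phi> e - {u}))"
    by (intro card_mono) auto
  also have "\<dots> \<le> card (\<Union>(\<phi> ` E)) + card (\<Union>e\<in>A'. \<phi> e - {u})" by (rule card_Un_le)
  also have "card (\<Union>e\<in>A'. \<phi> e - {u}) \<le> (\<Sum>e\<in>A'. card (\<phi> e - {u}))"
    by (rule card_UN_le[OF \<open>finite A'\<close>])
  also have "\<dots> = card A'"
    using A'_edges card_edge finite_edge by (simp add: card_Diff_singleton)
  finally have "card (\<Union>(\<phi> ` S)) \<le> \<alpha>" using few_vertices A'(2) E(3) by linarith
  then show False using sparse[OF S] by simp
qed

lemma inj_on_edges: "inj_on \<phi> C"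
proof (rule inj_onI, rule ccontr)
  fix e e' assume e: "e \<in> C" "e' \<in> C" "\<phi> e = \<phi> e'" "e \<noteq> e'"
  have "card {e, e'} \<le> \<alpha>" using e(4) t_pos two_t_le by simp
  then have "card {e, e'} < card (\<phi> e)"
    using card_lt_card_Union_edges[of "{e, e'}"] e by simp
  then show False using card_edge e(1,4) by simp
qed

definition neighbours :: "'v \<Rightarrow> 'v set" where
  "neighbours u = {w. \<exists>e\<in>C. \<phi> e = {u, w}}"

lemma neighbours_subset: "neighbours u \<subseteq> V"
  unfolding neighbours_def using edges_in_V by blast

lemma not_in_neighbours: "u \<notin> neighbours u"
  unfolding neighbours_def using card_edge by fastforce

lemma card_neighbours_ge:
  assumes "u \<in> V"
  shows "d \<le> card (neighbours u)"
proof -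
  define other where "other e = the_elem (\<phi> e - {u})" for e
  have edge_eq: "\<phi> e = {u, other e}" if "e \<in> C" "u \<in> \<phi> e" for e
  proof -
    have "card (\<phi> e - {u}) = 1" using that card_edge finite_edge by (simp add: card_Diff_singleton)
    then obtain w where "\<phi> e - {u} = {w}" by (rule card_1_singletonE)
    then show ?thesis using that(2) unfolding other_def by auto
  qed
  have "inj_on other {e \<in> C. u \<in> \<phi> e}"
    by (rule inj_onI) (metis (no_types, lifting) edge_eq inj_onD[OF inj_on_edges] mem_Collect_eq)
  moreover have "other ` {e \<in> C. u \<in> \<phi> e} \<subseteq> neighbours u"
    unfolding neighbours_def using edge_eq by blast
  moreover have "finite (neighbours u)" using neighbours_subset finite_V finite_subset by blast
  ultimately have "card {e \<in> C. u \<in> \<phi> e} \<le> card (neighbours u)"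
    by (metis card_image card_mono)
  then show ?thesis using degree_ge[OF assms] by linarith
qed

text \<open>Paths are normalised to \<open>undefined\<close> beyond their length, so that distinct paths are distinct functions.\<close>
definition paths :: "nat \<Rightarrow> (nat \<Rightarrow> 'v) set" where
  "paths i = {p. (\<forall>j\<le>i. p j \<in> V) \<and> inj_on p {..i} \<and> (\<forall>j<i. p (Suc j) \<in> neighbours (p j))
     \<and> (\<forall>j>i. p j = undefined)}"

lemma finite_paths: "finite (paths i)"
proof -
  have "paths i \<subseteq> (\<lambda>f j. if j \<le> i then f j else undefined) ` (PiE {..i} (\<lambda>_. V))"
  proof
    fix p assume "p \<in> paths i"
    then have "p = (\<lambda>j. if j \<le> i then restrict p {..i} j else undefined)"
      "restrict p {..i} \<in> PiE {..i} (\<lambda>_. V)"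
      unfolding paths_def by (auto simp: fun_eq_iff)
    then show "p \<in> (\<lambda>f j. if j \<le> i then f j else undefined) ` (PiE {..i} (\<lambda>_. V))" by blast
  qed
  then show ?thesis using finite_V by (meson finite_PiE finite_atMost finite_imageI finite_subset)
qed

lemma card_paths_0: "card (paths 0) = card V"
proof -
  have "paths 0 = (\<lambda>u j. if j = 0 then u else undefined) ` V"
  proof
    show "paths 0 \<subseteq> (\<lambda>u j. if j = 0 then u else undefined) ` V"
    proof
      fix p assume "p \<in> paths 0"
      then have "p = (\<lambda>j. if j = 0 then p 0 else undefined)" "p 0 \<in> V"
        unfolding paths_def by (auto simp: fun_eq_iff)
      then show "p \<in> (\<lambda>u j. if j = 0 then u else undefined) ` V" by blast
    qed
  qed (auto simp: paths_def)
  moreover have "inj_on (\<lambda>u j. if j = 0 then u else undefined) V"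
    by (rule inj_onI) (metis (mono_tags))
  ultimately show ?thesis by (metis card_image)
qed

lemma card_neighbours_off_path_ge:
  assumes "p \<in> paths i"
  shows "d - i \<le> card (neighbours (p i) - p ` {..i})"
proof -
  have "neighbours (p i) \<inter> p ` {..i} \<subseteq> p ` {..<i}"
    using not_in_neighbours by (auto simp: atMost_Suc le_less)
  then have "card (neighbours (p i) \<inter> p ` {..i}) \<le> i"
    by (metis card_image_le card_lessThan card_mono finite_imageI finite_lessThan le_trans)
  moreover have "neighbours (p i) = (neighbours (p i) - p ` {..i}) \<union> (neighbours (p i) \<inter> p ` {..i})"
    by auto
  then have "card (neighbours (p i))
      \<le> card (neighbours (p i) - p ` {..i}) + card (neighbours (p i) \<inter> p ` {..i})"
    by (metis card_Un_le)
  moreover have "p i \<in> V" using assms unfolding paths_def by auto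
  ultimately show ?thesis using card_neighbours_ge by fastforce
qed

lemma card_paths_Suc_ge: "(d - i) * card (paths i) \<le> card (paths (Suc i))"
proof -
  define new_ends where "new_ends p = neighbours (p i) - p ` {..i}" for p :: "nat \<Rightarrow> 'v"
  define g where "g = (\<lambda>(p :: nat \<Rightarrow> 'v, w). p(Suc i := w))"
  have image: "g ` (SIGMA p:paths i. new_ends p) \<subseteq> paths (Suc i)"
  proof
    fix x assume "x \<in> g ` (SIGMA p:paths i. new_ends p)"
    then obtain p w where pw: "p \<in> paths i" "w \<in> new_ends p" "x = p(Suc i := w)" unfolding g_def by auto
    have "x ` {..i} = p ` {..i}" "inj_on x {..i}" "x (Suc i) \<notin> x ` {..i}"
      using pw unfolding paths_def new_ends_def by (auto simp: inj_on_def)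
    then have "inj_on x {..Suc i}" by (simp add: atMost_Suc)
    then show "x \<in> paths (Suc i)"
      using pw neighbours_subset unfolding paths_def new_ends_def by (auto simp: le_Suc_eq less_Suc_eq)
  qed
  have inj: "inj_on g (SIGMA p:paths i. new_ends p)"
  proof (rule inj_onI)
    fix a b assume "a \<in> (SIGMA p:paths i. new_ends p)" "b \<in> (SIGMA p:paths i. new_ends p)" "g a = g b"
    then obtain p w p' w' where h: "a = (p, w)" "b = (p', w')" "p \<in> paths i" "p' \<in> paths i"
      "p(Suc i := w) = p'(Suc i := w')" unfolding g_def by auto
    have "w = w'" using h(5) by (metis fun_upd_same)
    moreover have "p j = p' j" for j
      using h(3,4) fun_cong[OF h(5), of j] unfolding paths_def by (cases "j = Suc i") auto
    ultimately show "a = b" using h by auto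
  qed
  have "finite (new_ends p)" for p
    unfolding new_ends_def using neighbours_subset finite_V finite_subset by blast
  have "(d - i) * card (paths i) = (\<Sum>p\<in>paths i. d - i)" by simp
  also have "\<dots> \<le> (\<Sum>p\<in>paths i. card (new_ends p))"
    unfolding new_ends_def using card_neighbours_off_path_ge by (rule sum_mono)
  also have "\<dots> = card (SIGMA p:paths i. new_ends p)"
    using finite_paths \<open>\<And>p. finite (new_ends p)\<close> by (simp add: card_SigmaI)
  also have "\<dots> = card (g ` (SIGMA p:paths i. new_ends p))" using inj by (simp add: card_image)
  also have "\<dots> \<le> card (paths (Suc i))" using image finite_paths by (rule card_mono[rotated])
  finally show ?thesis .
qed

lemma card_paths_ge: "i \<le> t \<Longrightarrow> card V * (d - t) ^ i \<le> card (paths i)"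
proof (induction i)
  case 0
  then show ?case using card_paths_0 by simp
next
  case (Suc i)
  then have "(d - t) * (card V * (d - t) ^ i) \<le> (d - i) * card (paths i)"
    by (intro mult_le_mono) auto
  also have "\<dots> \<le> card (paths (Suc i))" by (rule card_paths_Suc_ge)
  finally show ?case by (simp add: ac_simps)
qed

text \<open>
  Two paths of length \<open>t\<close> with the same endpoints would span a nonempty set of at most
  \<open>2t \<le> \<alpha>\<close> edges touching no more vertices than it has edges.
\<close>
lemma path_eq_if_same_endpoints:
  assumes p: "p \<in> paths t" and q: "q \<in> paths t" and "p 0 = q 0" "p t = q t"
  shows "p = q"
proof (rule ccontr)
  assume "p \<noteq> q"
  have "\<exists>i\<le>t. p i \<noteq> q i"
  proof (rule ccontr)
    assume "\<not> ?thesis"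
    then have "p j = q j" for j using p q unfolding paths_def by (cases "j \<le> t") auto
    then show False using \<open>p \<noteq> q\<close> by (simp add: fun_eq_iff)
  qed
  then obtain i where i: "i \<le> t" "p i \<noteq> q i" by blast
  have ip: "inj_on p {..t}" and iq: "inj_on q {..t}" using p q unfolding paths_def by auto
  define E where "E = {e \<in> C. \<phi> e \<in> path_edges p t \<union> path_edges q t}"
  have "{r j, r (Suc j)} \<in> \<phi> ` C" if "r \<in> paths t" "j < t" for r j
    using that unfolding paths_def neighbours_def by force
  then have "path_edges p t \<union> path_edges q t \<subseteq> \<phi> ` C"
    using p q unfolding path_edges_def by blast
  then have \<phi>_E: "\<phi> ` E = path_edges p t \<union> path_edges q t" unfolding E_def by blast
  have "E \<subseteq> C" unfolding E_def by blast
  have card_E: "card E = card (path_edges p t \<union> path_edges q t)"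
    using \<phi>_E card_image[OF inj_on_subset[OF inj_on_edges \<open>E \<subseteq> C\<close>]] by simp
  have "card (\<Union>(\<phi> ` E)) \<le> card E"
    using card_two_paths_le[OF ip iq assms(3,4) i] card_E \<phi>_E
      Union_path_edges[OF t_pos, of p] Union_path_edges[OF t_pos, of q] by (simp add: Union_Un_distrib)
  moreover have "card E \<le> \<alpha>"
    using card_E card_Un_le[of "path_edges p t" "path_edges q t"] card_path_edges[OF ip]
      card_path_edges[OF iq] two_t_le by linarith
  moreover have "{p 0, p (Suc 0)} \<in> \<phi> ` E" using \<phi>_E t_pos unfolding path_edges_def by force
  ultimately show False using card_lt_card_Union_edges[OF \<open>E \<subseteq> C\<close>] by fastforce
qed

lemma card_paths_le: "card (paths t) \<le> card V * card V"
proof -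
  have "inj_on (\<lambda>p. (p 0, p t)) (paths t)"
    by (rule inj_onI) (simp add: path_eq_if_same_endpoints)
  then have "card (paths t) = card ((\<lambda>p. (p 0, p t)) ` paths t)" by (simp add: card_image)
  also have "\<dots> \<le> card (V \<times> V)"
    using finite_V by (intro card_mono) (auto simp: paths_def)
  finally show ?thesis by (simp add: card_cartesian_product)
qed

lemma degree_bound: "V \<noteq> {} \<Longrightarrow> (d - t) ^ t \<le> card V"
  using order_trans[OF card_paths_ge[OF order_refl] card_paths_le] finite_V
  by (simp add: card_gt_0_iff)

lemma degree_le_root_card:
  assumes "V \<noteq> {}"
  shows "real d \<le> real t + real (card V) powr (1 / real t)"
proof (rule ccontr)
  define N where "N = real (card V)"
  assume "\<not> ?thesis"
  then have root_lt: "N powr (1 / real t) < real d - real t" unfolding N_def by simp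
  then have "t \<le> d" using powr_ge_zero[of N "1 / real t"] by linarith
  have "0 < N" using assms finite_V unfolding N_def by (simp add: card_gt_0_iff)
  have "N = (N powr (1 / real t)) ^ t"
    using \<open>0 < N\<close> t_pos by (simp add: powr_realpow[symmetric] powr_powr)
  also have "\<dots> < (real d - real t) ^ t" using root_lt t_pos by (intro power_strict_mono) auto
  also have "\<dots> = real ((d - t) ^ t)" using \<open>t \<le> d\<close> by (simp add: of_nat_diff)
  also have "\<dots> \<le> N" unfolding N_def using degree_bound[OF assms] by simp
  finally show False by simp
qed

end

lemma card_sparse_edges_le:
  fixes C :: "'e set" and \<phi> :: "'e \<Rightarrow> 'v set" and V :: "'v set"
  assumes finite_C: "finite C" and finite_V: "finite V"
    and card_edge: "\<And>e. e \<in> C \<Longrightarrow> card (\<phi> e) = 2"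
    and edges_in_V: "\<Union>(\<phi> ` C) \<subseteq> V"
    and sparse: "\<And>S. S \<subseteq> C \<Longrightarrow> card S = \<alpha> \<Longrightarrow> \<alpha> < card (\<Union>(\<phi> ` S))"
    and "1 \<le> t" "2 * t \<le> \<alpha>"
  shows "real (card C) \<le> (real \<alpha> + real t + real (card V) powr (1 / real t)) * real (card V)"
proof (rule ccontr)
  define c where "c = real \<alpha> + real t + real (card V) powr (1 / real t)"
  assume "\<not> ?thesis"
  then have many_edges: "c * card V < card C" unfolding c_def by simp
  have "0 \<le> c" unfolding c_def by (intro add_nonneg_nonneg) auto
  obtain C' V' where C': "C' \<subseteq> C" "C' \<noteq> {}" and V': "V' \<subseteq> V" "\<Union>(\<phi> ` C') \<subseteq> V'"
    and degree: "\<forall>u\<in>V'. c < card {e \<in> C'. u \<in> \<phi> e}"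
    using exists_subgraph_degree_gt[OF \<open>0 \<le> c\<close> finite_V finite_C edges_in_V many_edges] by blast
  define d where "d = nat \<lfloor>c\<rfloor> + 1"
  have "real d = of_int \<lfloor>c\<rfloor> + 1" unfolding d_def using \<open>0 \<le> c\<close> by simp
  then have "c < d" using real_of_int_floor_add_one_gt[of c] by linarith
  have d_le: "d \<le> m" if "c < m" for m :: nat
  proof -
    have "\<lfloor>c\<rfloor> < int m" using that by (simp add: floor_less_iff)
    then show ?thesis unfolding d_def using \<open>0 \<le> c\<close> by (simp add: Suc_le_eq nat_less_iff)
  qed
  have "real \<alpha> < d" using \<open>c < d\<close> powr_ge_zero[of "real (card V)" "1 / real t"] unfolding c_def by linarith
  interpret G: sparse_graph C' \<phi> V' \<alpha> t d
  proof
    show "finite C'" using C'(1) finite_C finite_subset by blast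
    show "finite V'" using V'(1) finite_V finite_subset by blast
    show "d \<le> card {e \<in> C'. u \<in> \<phi> e}" if "u \<in> V'" for u using d_le degree that by blast
    show "\<alpha> < card (\<Union>(\<phi> ` S))" if "S \<subseteq> C'" "card S = \<alpha>" for S using sparse that C'(1) by blast
  qed (use C'(1) V'(2) card_edge \<open>real \<alpha> < d\<close> assms(6,7) in auto)
  obtain e where "e \<in> C'" using C'(2) by blast
  then have "\<phi> e \<noteq> {}" using G.card_edge[of e] by force
  then have "V' \<noteq> {}" using V'(2) \<open>e \<in> C'\<close> by blast
  then have "real d \<le> real t + real (card V') powr (1 / real t)" by (rule G.degree_le_root_card)
  also have "\<dots> \<le> real t + real (card V) powr (1 / real t)"
    using card_mono[OF finite_V V'(1)] by (simp add: powr_mono2)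
  also have "\<dots> \<le> c" unfolding c_def by simp
  finally show False using \<open>c < d\<close> by simp
qed

lemma covering_code_card_le:
  fixes C :: "(nat \<Rightarrow> 'a::{field,finite}) set set"
  assumes "k \<ge> 1" "\<alpha> \<ge> 3" "\<delta> \<ge> (\<alpha> - 1) * (k - 1)" and code: "covering_code \<alpha> n k \<delta> C"
  shows "real (card C)
    \<le> (real \<alpha> + real (\<alpha> div 2) + 1) * real CARD('a) powr ((1 + 1 / real (\<alpha> div 2)) * real n)"
proof -
  define t where "t = \<alpha> div 2"
  have "1 \<le> t" "2 * t \<le> \<alpha>" unfolding t_def using \<open>\<alpha> \<ge> 3\<close> by auto
  define q where "q = real CARD('a)"
  have "2 \<le> q" unfolding q_def using CARD_field_ge_2[where 'a='a] by simp
  define N where "N = real (card (Fn n :: (nat \<Rightarrow> 'a) set))"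
  define Q where "Q = q powr ((1 + 1 / real t) * real n)"
  have "N = q ^ n" unfolding N_def q_def by (simp add: card_Fn)
  also have "\<dots> = q powr real n" using \<open>2 \<le> q\<close> by (simp add: powr_realpow)
  finally have N: "N = q powr real n" .
  have "N \<le> Q" unfolding N Q_def using \<open>2 \<le> q\<close> by (intro powr_mono) (auto simp: algebra_simps)
  have "N powr (1 / real t) * N = q powr (real n / real t) * q powr real n"
    unfolding N by (simp add: powr_powr)
  also have "\<dots> = Q" unfolding Q_def by (simp add: powr_add[symmetric] distrib_right add.commute)
  finally have NQ: "N powr (1 / real t) * N = Q" .
  have "0 \<le> Q" unfolding Q_def by simp
  have C: "C \<subseteq> Grass n k" using code unfolding covering_code_def by simp
  have "real (card C) \<le> (real \<alpha> + real t) * Q + Q"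
  proof (cases "k = 1")
    case True
    then have "card C \<le> CARD('a) ^ n" using card_Grass_1_le C by simp
    then have "real (card C) \<le> N" unfolding N_def by (simp add: card_Fn)
    moreover have "0 \<le> (real \<alpha> + real t) * Q" using \<open>0 \<le> Q\<close> by simp
    ultimately show ?thesis using \<open>N \<le> Q\<close> by linarith
  next
    case False
    then have "k \<ge> 2" using \<open>k \<ge> 1\<close> by simp
    have "\<alpha> \<ge> 1" using \<open>\<alpha> \<ge> 3\<close> by simp
    obtain \<phi> :: "(nat \<Rightarrow> 'a) set \<Rightarrow> (nat \<Rightarrow> 'a) set"
      where "\<And>W. W \<in> C \<Longrightarrow> card (\<phi> W) = 2" "\<Union>(\<phi> ` C) \<subseteq> Fn n"
        "\<And>S. S \<subseteq> C \<Longrightarrow> card S = \<alpha> \<Longrightarrow> \<alpha> < card (\<Union>(\<phi> ` S))"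
      using covering_code_edge_map[OF code \<open>k \<ge> 2\<close> \<open>\<alpha> \<ge> 1\<close> assms(3)] by blast
    moreover have "finite C" using C finite_Grass finite_subset by blast
    ultimately have "real (card C) \<le> (real \<alpha> + real t + N powr (1 / real t)) * N"
      unfolding N_def by (intro card_sparse_edges_le[OF _ finite_Fn _ _ _ \<open>1 \<le> t\<close> \<open>2 * t \<le> \<alpha>\<close>])
    also have "\<dots> = (real \<alpha> + real t) * N + N powr (1 / real t) * N" by (simp add: distrib_right)
    also have "\<dots> \<le> (real \<alpha> + real t) * Q + Q"
      using \<open>N \<le> Q\<close> NQ by (simp add: mult_left_mono)
    finally show ?thesis .
  qed
  then show ?thesis unfolding Q_def q_def t_def by (simp add: distrib_right)
qed

lemma Bq_attained:
  assumes "\<alpha> \<ge> 1"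
  obtains C :: "(nat \<Rightarrow> 'a::{field,finite}) set set"
  where "covering_code \<alpha> n k \<delta> C" "Bq TYPE('a) n k \<delta> \<alpha> = card C"
proof -
  define A where "A = {card C | C. covering_code \<alpha> n k \<delta> (C :: (nat \<Rightarrow> 'a) set set)}"
  have "covering_code \<alpha> n k \<delta> ({} :: (nat \<Rightarrow> 'a) set set)"
    unfolding covering_code_def using assms by auto
  then have "A \<noteq> {}" unfolding A_def by blast
  moreover have "A \<subseteq> card ` Pow (Grass n k :: (nat \<Rightarrow> 'a) set set)"
    unfolding A_def covering_code_def by auto
  then have "finite A" using finite_Grass finite_subset by blast
  ultimately have "Max A \<in> A" by (rule Max_in[rotated])
  then obtain C :: "(nat \<Rightarrow> 'a) set set" where "covering_code \<alpha> n k \<delta> C" "Max A = card C"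
    unfolding A_def by blast
  moreover have "Bq TYPE('a) n k \<delta> \<alpha> = Max A" unfolding Bq_def A_def ..
  ultimately show thesis using that by simp
qed

theorem mainTheorem4:
  fixes k \<delta> \<alpha> :: nat
  assumes "k \<ge> 1" and "\<delta> \<ge> 1" and "\<alpha> \<ge> 3"
    and "\<delta> \<ge> (\<alpha> - 1) * (k - 1)"
  shows "(\<lambda>n. real (Bq TYPE('a::{field,finite}) n k \<delta> \<alpha>))
           \<in> O(\<lambda>n. real (CARD('a)) powr ((1 + 1 / real (\<alpha> div 2)) * real n))"
proof (rule bigoI)
  have "real (Bq TYPE('a) n k \<delta> \<alpha>)
      \<le> (real \<alpha> + real (\<alpha> div 2) + 1) * real CARD('a) powr ((1 + 1 / real (\<alpha> div 2)) * real n)" for n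
  proof -
    have "\<alpha> \<ge> 1" using \<open>\<alpha> \<ge> 3\<close> by simp
    then obtain C :: "(nat \<Rightarrow> 'a) set set" where "covering_code \<alpha> n k \<delta> C" "Bq TYPE('a) n k \<delta> \<alpha> = card C"
      by (rule Bq_attained)
    with covering_code_card_le[OF \<open>k \<ge> 1\<close> \<open>\<alpha> \<ge> 3\<close> assms(4)] show ?thesis by simp
  qed
  then show "\<forall>\<^sub>F n in at_top. norm (real (Bq TYPE('a) n k \<delta> \<alpha>))
      \<le> (real \<alpha> + real (\<alpha> div 2) + 1) * norm (real CARD('a) powr ((1 + 1 / real (\<alpha> div 2)) * real n))"
    by (intro always_eventually allI) simp
qed

end
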